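(* Let $q(x_1,\ldots,x_m)=(q_1(x_1),\ldots,q_m(x_m))$ with each $q_i(x_i)\in\mathbb{R}$, where each input component $x_i$ lies in a metric space with metric $d$. Define the distance between inputs $x=(x_1,\ldots,x_m)$ and $x'=(x'_1,\ldots,x'_m)$ as $d(x,x')=\|(d(x_1,x'_1),\ldots,d(x_m,x'_m))\|_p$ for some $p\in[1,\infty]$. For each $i$ let $\tilde q_i$ be an $\epsilon_i$-differentially private mechanism for $q_i$, the mechanisms using independent randomness. Then the mechanism $\tilde q=(\tilde q_1,\ldots,\tilde q_m)$ is $\|(\epsilon_1,\ldots,\epsilon_m)\|_{p^*}$-differentially private with respect to $d$, where $\ell_{p^*}$ is the dual norm of $\ell_p$ (i.e. $1/p+1/p^*=1$).
   Context: A randomized mechanism $M$ on a metric space with metric $d$ is $\epsilon$-differentially private ($\epsilon\ge0$) if for all inputs $x,x'$ with $d(x,x')\le D$ and every set $S$ of outputs, $\Pr[M(x)\in S]\le e^{D\epsilon}\Pr[M(x')\in S]$. For $\tilde q_i$ this is with respect to the metric $d$ on the $i$-th input component; for $\tilde q$ it is with respect to the $\ell_p$-combined distance above, with output sets $S\subseteq\mathbb{R}^m$. *)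

theory Defs
  imports "HOL-Probability.Probability"
begin

definition lp_norm :: "ereal \<Rightarrow> nat \<Rightarrow> (nat \<Rightarrow> real) \<Rightarrow> real" where
  "lp_norm p m v =
     (if p = \<infinity> then Max (insert 0 ((\<lambda>i. \<bar>v i\<bar>) ` {..<m}))
      else (\<Sum>i<m. \<bar>v i\<bar> powr (real_of_ereal p)) powr (1 / real_of_ereal p))"

definition conj_exp :: "ereal \<Rightarrow> ereal" where
  "conj_exp p = (if p = 1 then \<infinity> else if p = \<infinity> then 1 else p / (p - 1))"

definition diff_private ::
  "'b measure \<Rightarrow> ('x \<Rightarrow> 'x \<Rightarrow> real) \<Rightarrow> ('x \<Rightarrow> 'b measure) \<Rightarrow> real \<Rightarrow> bool" where
  "diff_private N d M eps \<longleftrightarrow> 0 \<le> eps \<and>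
     (\<forall>x x' D. d x x' \<le> D \<longrightarrow>
        (\<forall>S \<in> sets N. measure (M x) S \<le> exp (D * eps) * measure (M x') S))"

end

theory Submission
  imports Defs
begin

text \<open>Differential privacy of the \<open>i\<close>-th mechanism says that its output
  law at \<open>x\<^sub>i\<close> is dominated by \<open>exp (\<epsilon>\<^sub>i d(x\<^sub>i, x'\<^sub>i))\<close> times its law at \<open>x'\<^sub>i\<close>, so it has a density
  bounded by this constant with respect to that law. Independence makes the product of these densities
  a density of the joint law at \<open>x\<close> with respect to the joint law at \<open>x'\<close>, bounded by
  \<open>exp (\<Sum>\<^sub>i \<epsilon>\<^sub>i d(x\<^sub>i, x'\<^sub>i))\<close>; by Hoelder's inequality the exponent is at most
  \<open>\<parallel>d(x, x')\<parallel>\<^sub>p \<parallel>\<epsilon>\<parallel>\<^sub>p\<^sub>*\<close>.\<close>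

lemma Hoelder_inequality_sum:
  fixes a b :: "'i \<Rightarrow> real"
  assumes "finite I" and p: "p > 1" and q: "q > 1" and pq: "1/p + 1/q = 1"
    and a: "\<And>i. i \<in> I \<Longrightarrow> 0 \<le> a i" and b: "\<And>i. i \<in> I \<Longrightarrow> 0 \<le> b i"
  shows "(\<Sum>i\<in>I. a i * b i) \<le> (\<Sum>i\<in>I. a i powr p) powr (1/p) * (\<Sum>i\<in>I. b i powr q) powr (1/q)"
proof -
  define A where "A = (\<Sum>i\<in>I. a i powr p) powr (1/p)"
  define B where "B = (\<Sum>i\<in>I. b i powr q) powr (1/q)"
  show ?thesis
  proof (cases "A = 0 \<or> B = 0")
    case True
    then have "(\<Sum>i\<in>I. a i * b i) = 0"
      using \<open>finite I\<close> a b by (auto simp: A_def B_def sum_nonneg_eq_0_iff)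
    then show ?thesis
      by simp
  next
    case False
    then have "A > 0" "B > 0"
      using a b by (simp_all add: A_def B_def)
    have Ap: "A powr p = (\<Sum>i\<in>I. a i powr p)" and Bq: "B powr q = (\<Sum>i\<in>I. b i powr q)"
      unfolding A_def B_def using p q by (simp_all add: powr_powr sum_nonneg)
    have "(\<Sum>i\<in>I. a i * b i) / (A * B) = (\<Sum>i\<in>I. (a i / A) * (b i / B))"
      by (simp add: sum_divide_distrib)
    also have "\<dots> \<le> (\<Sum>i\<in>I. (a i / A) powr p / p + (b i / B) powr q / q)"
      using a b \<open>A > 0\<close> \<open>B > 0\<close> by (intro sum_mono Youngs_inequality[OF p q pq]) auto
    also have "\<dots> = (\<Sum>i\<in>I. a i powr p) / A powr p / p + (\<Sum>i\<in>I. b i powr q) / B powr q / q"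
      using a b \<open>A > 0\<close> \<open>B > 0\<close> by (simp add: sum.distrib powr_divide sum_divide_distrib)
    also have "\<dots> = 1"
      unfolding Ap[symmetric] Bq[symmetric] using \<open>A > 0\<close> \<open>B > 0\<close> pq by simp
    finally show ?thesis
      using \<open>A > 0\<close> \<open>B > 0\<close> by (simp add: A_def B_def divide_le_eq)
  qed
qed

lemma lp_norm_nonneg: "0 \<le> lp_norm p m v"
  unfolding lp_norm_def by (auto intro: Max_ge_iff[THEN iffD2])

lemma lp_norm_1: "lp_norm 1 m v = (\<Sum>i<m. \<bar>v i\<bar>)"
  by (simp add: lp_norm_def sum_nonneg)

lemma abs_le_lp_norm_infinity: "i < m \<Longrightarrow> \<bar>v i\<bar> \<le> lp_norm \<infinity> m v"
  by (auto simp: lp_norm_def intro!: Max_ge)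

lemma conj_exp_ereal:
  assumes "1 < r"
  shows "conj_exp (ereal r) = ereal (r / (r - 1))"
proof -
  have "ereal r - 1 = ereal (r - 1)"
    by (simp add: one_ereal_def)
  then show ?thesis
    using assms unfolding conj_exp_def by (simp del: ereal_minus)
qed

lemma sum_mult_le_lp_norm_infinity_1:
  "(\<Sum>i<m. a i * b i) \<le> lp_norm \<infinity> m a * lp_norm 1 m b"
proof -
  have "a i * b i \<le> lp_norm \<infinity> m a * \<bar>b i\<bar>" if "i < m" for i
  proof -
    have "a i * b i \<le> \<bar>a i\<bar> * \<bar>b i\<bar>"
      by (simp flip: abs_mult)
    also have "\<dots> \<le> lp_norm \<infinity> m a * \<bar>b i\<bar>"
      using that by (intro mult_right_mono abs_le_lp_norm_infinity) auto
    finally show ?thesis .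
  qed
  then have "(\<Sum>i<m. a i * b i) \<le> (\<Sum>i<m. lp_norm \<infinity> m a * \<bar>b i\<bar>)"
    by (intro sum_mono) auto
  then show ?thesis
    by (simp add: lp_norm_1 sum_distrib_left)
qed

lemma lp_norm_Hoelder:
  assumes "1 \<le> p"
  shows "(\<Sum>i<m. a i * b i) \<le> lp_norm p m a * lp_norm (conj_exp p) m b"
proof -
  consider "p = \<infinity>" | "p = 1" | r where "p = ereal r" "1 < r"
    using assms by (cases p) (auto simp: order.order_iff_strict)
  then show ?thesis
  proof cases
    case 1
    then show ?thesis
      using sum_mult_le_lp_norm_infinity_1 by (simp add: conj_exp_def)
  next
    case 2
    then show ?thesis
      using sum_mult_le_lp_norm_infinity_1[where a = b and b = a]
      by (simp add: conj_exp_def mult.commute)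
  next
    case 3
    define q where "q = r / (r - 1)"
    have "q > 1" "1/r + 1/q = 1"
      using 3 by (auto simp: q_def field_simps)
    have "(\<Sum>i<m. a i * b i) \<le> (\<Sum>i<m. \<bar>a i\<bar> * \<bar>b i\<bar>)"
      by (intro sum_mono) (simp flip: abs_mult)
    also have "\<dots> \<le> (\<Sum>i<m. \<bar>a i\<bar> powr r) powr (1/r) * (\<Sum>i<m. \<bar>b i\<bar> powr q) powr (1/q)"
      using 3 \<open>q > 1\<close> \<open>1/r + 1/q = 1\<close> by (intro Hoelder_inequality_sum) auto
    finally show ?thesis
      using 3 by (simp add: lp_norm_def conj_exp_ereal flip: q_def)
  qed
qed

lemma AE_le_if_density_dominated:
  fixes g :: "'a \<Rightarrow> ennreal" and c :: real
  assumes "finite_measure \<nu>" and [measurable]: "g \<in> borel_measurable \<nu>"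
    and le: "\<And>A. A \<in> sets \<nu> \<Longrightarrow> emeasure (density \<nu> g) A \<le> c * emeasure \<nu> A"
  shows "AE x in \<nu>. g x \<le> c"
proof -
  interpret finite_measure \<nu> by fact
  define B where "B = {x\<in>space \<nu>. c < g x}"
  have [measurable]: "B \<in> sets \<nu>"
    unfolding B_def by measurable
  have "AE x in \<nu>. g x * indicator B x \<le> ennreal c * indicator B x"
  proof (rule ccontr)
    assume "\<not> ?thesis"
    moreover have "(\<integral>\<^sup>+x. ennreal c * indicator B x \<partial>\<nu>) \<noteq> \<infinity>"
      by (simp add: nn_integral_cmult_indicator ennreal_mult_eq_top_iff)
    ultimately have "(\<integral>\<^sup>+x. ennreal c * indicator B x \<partial>\<nu>) < (\<integral>\<^sup>+x. g x * indicator B x \<partial>\<nu>)"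
      by (intro nn_integral_less) (auto simp: B_def indicator_def less_imp_le)
    also have "\<dots> = emeasure (density \<nu> g) B"
      by (simp add: emeasure_density)
    also have "\<dots> \<le> (\<integral>\<^sup>+x. ennreal c * indicator B x \<partial>\<nu>)"
      using le[of B] by (simp add: nn_integral_cmult_indicator)
    finally show False
      by simp
  qed
  then show ?thesis
    by (rule AE_mp) (auto simp: B_def indicator_def split: if_splits)
qed

lemma eq_density_min_RN_deriv_if_dominated:
  fixes c :: real
  assumes "finite_measure \<nu>" and sets_eq: "sets \<mu> = sets \<nu>"
    and le: "\<And>A. A \<in> sets \<nu> \<Longrightarrow> emeasure \<mu> A \<le> c * emeasure \<nu> A"
  shows "\<mu> = density \<nu> (\<lambda>x. min (RN_deriv \<nu> \<mu> x) c)"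
proof -
  interpret finite_measure \<nu> by fact
  have "absolutely_continuous \<nu> \<mu>"
    unfolding absolutely_continuous_def
  proof
    fix A assume "A \<in> null_sets \<nu>"
    with le[of A] sets_eq show "A \<in> null_sets \<mu>"
      by (auto simp: null_sets_def)
  qed
  then have \<mu>: "\<mu> = density \<nu> (RN_deriv \<nu> \<mu>)"
    using density_RN_deriv[OF _ sets_eq] by simp
  also have "\<dots> = density \<nu> (\<lambda>x. min (RN_deriv \<nu> \<mu> x) c)"
    using AE_le_if_density_dominated[OF \<open>finite_measure \<nu>\<close>, of "RN_deriv \<nu> \<mu>" c] le
    by (intro density_cong) (auto simp flip: \<mu> elim!: AE_mp simp: min_def)
  finally show ?thesis .
qed

lemma finite_measure_if_dominated:
  fixes c :: real
  assumes fin: "finite_measure \<nu>" and sets_eq: "sets \<mu> = sets \<nu>"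
    and le: "\<And>A. A \<in> sets \<nu> \<Longrightarrow> emeasure \<mu> A \<le> c * emeasure \<nu> A"
  shows "finite_measure \<mu>"
proof (rule finite_measureI)
  have "emeasure \<mu> (space \<mu>) \<le> c * emeasure \<nu> (space \<nu>)"
    using le[of "space \<nu>"] sets_eq_imp_space_eq[OF sets_eq] by simp
  also have "\<dots> < \<infinity>"
    using finite_measure.emeasure_finite[OF fin] by (simp add: ennreal_mult_less_top less_top)
  finally show "emeasure \<mu> (space \<mu>) \<noteq> \<infinity>"
    by simp
qed

lemma PiM_density:
  assumes "finite I"
    and N: "\<And>i. i \<in> I \<Longrightarrow> sigma_finite_measure (N i)"
    and ND: "\<And>i. i \<in> I \<Longrightarrow> sigma_finite_measure (density (N i) (f i))"
    and f: "\<And>i. i \<in> I \<Longrightarrow> f i \<in> borel_measurable (N i)"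
  shows "PiM I (\<lambda>i. density (N i) (f i)) = density (PiM I N) (\<lambda>x. \<Prod>i\<in>I. f i (x i))"
proof -
  \<comment> \<open>\<open>product_sigma_finite\<close> wants a factor at every index, so pad outside \<open>I\<close> by a point\<close>
  let ?N = "\<lambda>i. if i \<in> I then N i else count_space {undefined}"
  let ?D = "\<lambda>i. if i \<in> I then density (N i) (f i) else count_space {undefined}"
  interpret N: product_sigma_finite ?N
    unfolding product_sigma_finite_def using N by (auto intro: sigma_finite_measure_count_space_finite)
  interpret D: product_sigma_finite ?D
    unfolding product_sigma_finite_def using ND by (auto intro: sigma_finite_measure_count_space_finite)
  have PiM_N: "PiM I N = PiM I ?N" and PiM_D: "PiM I (\<lambda>i. density (N i) (f i)) = PiM I ?D"
    by (auto intro: PiM_cong)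
  have [measurable]: "(\<lambda>x. \<Prod>i\<in>I. f i (x i)) \<in> borel_measurable (PiM I N)"
    using f by (intro borel_measurable_prod_ennreal) auto
  have "density (PiM I N) (\<lambda>x. \<Prod>i\<in>I. f i (x i)) = PiM I ?D"
  proof (rule D.PiM_eqI[OF \<open>finite I\<close>])
    show "sets (density (PiM I N) (\<lambda>x. \<Prod>i\<in>I. f i (x i))) = sets (PiM I ?D)"
      by (auto simp: PiM_N intro!: sets_PiM_cong)
    fix A assume A: "\<And>i. i \<in> I \<Longrightarrow> A i \<in> sets (?D i)"
    then have [measurable]: "PiE I A \<in> sets (PiM I N)"
      using \<open>finite I\<close> by (intro sets_PiM_I_finite) auto
    have "indicator (PiE I A) x = (\<Prod>i\<in>I. indicator (A i) (x i) :: ennreal)"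
      if "x \<in> space (PiM I N)" for x
      using that \<open>finite I\<close> by (auto simp: indicator_def space_PiM PiE_def extensional_def Pi_iff intro!: prod.neutral)
    then have "emeasure (density (PiM I N) (\<lambda>x. \<Prod>i\<in>I. f i (x i))) (PiE I A)
        = (\<integral>\<^sup>+ x. (\<Prod>i\<in>I. f i (x i) * indicator (A i) (x i)) \<partial>PiM I N)"
      by (simp add: emeasure_density prod.distrib cong: nn_integral_cong)
    also have "\<dots> = (\<Prod>i\<in>I. \<integral>\<^sup>+ y. f i y * indicator (A i) y \<partial>N i)"
      unfolding PiM_N using \<open>finite I\<close> f A by (subst N.product_nn_integral_prod) auto
    also have "\<dots> = (\<Prod>i\<in>I. emeasure (?D i) (A i))"
      using f A by (intro prod.cong refl) (simp add: emeasure_density)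
    finally show "emeasure (density (PiM I N) (\<lambda>x. \<Prod>i\<in>I. f i (x i))) (PiE I A) = (\<Prod>i\<in>I. emeasure (?D i) (A i))" .
  qed
  then show ?thesis
    by (simp add: PiM_D)
qed

lemma emeasure_PiM_le_prod:
  fixes c :: "'i \<Rightarrow> real"
  assumes "finite I"
    and fin: "\<And>i. i \<in> I \<Longrightarrow> finite_measure (\<nu> i)"
    and sets_eq: "\<And>i. i \<in> I \<Longrightarrow> sets (\<mu> i) = sets (\<nu> i)"
    and le: "\<And>i A. i \<in> I \<Longrightarrow> A \<in> sets (\<nu> i) \<Longrightarrow> emeasure (\<mu> i) A \<le> c i * emeasure (\<nu> i) A"
    and c: "\<And>i. i \<in> I \<Longrightarrow> 0 \<le> c i"
    and S: "S \<in> sets (PiM I \<nu>)"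
  shows "emeasure (PiM I \<mu>) S \<le> (\<Prod>i\<in>I. c i) * emeasure (PiM I \<nu>) S"
proof -
  define f where "f i x = min (RN_deriv (\<nu> i) (\<mu> i) x) (c i)" for i x
  have f_measurable: "f i \<in> borel_measurable (\<nu> i)" for i
    unfolding f_def by measurable
  have \<mu>: "\<mu> i = density (\<nu> i) (f i)" if "i \<in> I" for i
    unfolding f_def using eq_density_min_RN_deriv_if_dominated[OF fin sets_eq le] that by blast
  have "PiM I \<mu> = PiM I (\<lambda>i. density (\<nu> i) (f i))"
    using \<mu> by (rule PiM_cong[OF refl])
  also have "\<dots> = density (PiM I \<nu>) (\<lambda>x. \<Prod>i\<in>I. f i (x i))"
  proof (rule PiM_density[OF \<open>finite I\<close>])
    fix i assume "i \<in> I"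
    show "sigma_finite_measure (\<nu> i)"
      using fin[OF \<open>i \<in> I\<close>] by (rule finite_measure.axioms(1))
    have "finite_measure (density (\<nu> i) (f i))"
      using finite_measure_if_dominated[OF fin sets_eq le] \<mu> \<open>i \<in> I\<close> by metis
    then show "sigma_finite_measure (density (\<nu> i) (f i))"
      by (rule finite_measure.axioms(1))
  qed (rule f_measurable)
  finally have "emeasure (PiM I \<mu>) S = (\<integral>\<^sup>+ x. (\<Prod>i\<in>I. f i (x i)) * indicator S x \<partial>PiM I \<nu>)"
    using S f_measurable by (simp add: emeasure_density measurable_PiM_component_rev borel_measurable_prod_ennreal)
  also have "\<dots> \<le> (\<integral>\<^sup>+ x. (\<Prod>i\<in>I. ennreal (c i)) * indicator S x \<partial>PiM I \<nu>)"
    by (intro nn_integral_mono mult_right_mono prod_mono_ennreal) (auto simp: f_def)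
  also have "\<dots> = (\<Prod>i\<in>I. c i) * emeasure (PiM I \<nu>) S"
    using S c by (simp add: nn_integral_cmult_indicator prod_ennreal)
  finally show ?thesis .
qed

lemma measure_PiM_le_prod:
  fixes c :: "'i \<Rightarrow> real"
  assumes "finite I"
    and prob_\<mu>: "\<And>i. i \<in> I \<Longrightarrow> prob_space (\<mu> i)" and prob_\<nu>: "\<And>i. i \<in> I \<Longrightarrow> prob_space (\<nu> i)"
    and sets_eq: "\<And>i. i \<in> I \<Longrightarrow> sets (\<mu> i) = sets (\<nu> i)"
    and le: "\<And>i A. i \<in> I \<Longrightarrow> A \<in> sets (\<nu> i) \<Longrightarrow> measure (\<mu> i) A \<le> c i * measure (\<nu> i) A"
    and c: "\<And>i. i \<in> I \<Longrightarrow> 0 \<le> c i"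
    and S: "S \<in> sets (PiM I \<nu>)"
  shows "measure (PiM I \<mu>) S \<le> (\<Prod>i\<in>I. c i) * measure (PiM I \<nu>) S"
proof -
  interpret P\<mu>: prob_space "PiM I \<mu>"
    using prob_\<mu> by (rule prob_space_PiM)
  interpret P\<nu>: prob_space "PiM I \<nu>"
    using prob_\<nu> by (rule prob_space_PiM)
  have "emeasure (\<mu> i) A \<le> c i * emeasure (\<nu> i) A" if "i \<in> I" "A \<in> sets (\<nu> i)" for i A
  proof -
    interpret \<mu>: prob_space "\<mu> i" using prob_\<mu> that(1) .
    interpret \<nu>: prob_space "\<nu> i" using prob_\<nu> that(1) .
    show ?thesis
      using le[OF that] c[OF that(1)]
      by (simp add: \<mu>.emeasure_eq_measure \<nu>.emeasure_eq_measure flip: ennreal_mult)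
  qed
  then have "emeasure (PiM I \<mu>) S \<le> (\<Prod>i\<in>I. c i) * emeasure (PiM I \<nu>) S"
    using \<open>finite I\<close> prob_\<nu> sets_eq c S by (intro emeasure_PiM_le_prod) (auto intro: prob_space.axioms(1))
  then show ?thesis
    using c by (simp add: P\<mu>.emeasure_eq_measure P\<nu>.emeasure_eq_measure prod_nonneg flip: ennreal_mult)
qed

theorem theorem4:
  fixes M :: "nat \<Rightarrow> 'a::metric_space \<Rightarrow> real measure"
    and eps :: "nat \<Rightarrow> real" and m :: nat and p :: ereal
  assumes "1 \<le> p"
    and "\<And>i y. i < m \<Longrightarrow> prob_space (M i y)"
    and "\<And>i y. i < m \<Longrightarrow> sets (M i y) = sets borel"
    and "\<And>i. i < m \<Longrightarrow> diff_private borel dist (M i) (eps i)"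
  shows "diff_private (PiM {..<m} (\<lambda>_. borel))
           (\<lambda>x x'. lp_norm p m (\<lambda>i. dist (x i) (x' i)))
           (\<lambda>x. PiM {..<m} (\<lambda>i. M i (x i)))
           (lp_norm (conj_exp p) m eps)"
proof -
  let ?L = "lp_norm (conj_exp p) m eps"
  have eps_private: "\<And>y y' A. A \<in> sets borel \<Longrightarrow>
      measure (M i y) A \<le> exp (dist y y' * eps i) * measure (M i y') A" if "i < m" for i
    using assms(4)[OF that] unfolding diff_private_def by blast
  show ?thesis
    unfolding diff_private_def
  proof (intro conjI allI impI ballI)
    show "0 \<le> ?L"
      by (rule lp_norm_nonneg)
    fix x x' :: "nat \<Rightarrow> 'a" and D :: real and S
    assume D: "lp_norm p m (\<lambda>i. dist (x i) (x' i)) \<le> D"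
      and S: "S \<in> sets (PiM {..<m} (\<lambda>_. borel :: real measure))"
    have "(\<Sum>i<m. dist (x i) (x' i) * eps i) \<le> lp_norm p m (\<lambda>i. dist (x i) (x' i)) * ?L"
      by (rule lp_norm_Hoelder[OF assms(1)])
    also have "\<dots> \<le> D * ?L"
      using D by (intro mult_right_mono lp_norm_nonneg)
    finally have exponent: "(\<Prod>i<m. exp (dist (x i) (x' i) * eps i)) \<le> exp (D * ?L)"
      by (simp flip: exp_sum)
    have "sets (PiM {..<m} (\<lambda>i. M i (x' i))) = sets (PiM {..<m} (\<lambda>_. borel))"
      using assms(3) by (intro sets_PiM_cong) auto
    then have "measure (PiM {..<m} (\<lambda>i. M i (x i))) S
        \<le> (\<Prod>i<m. exp (dist (x i) (x' i) * eps i)) * measure (PiM {..<m} (\<lambda>i. M i (x' i))) S"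
      using assms(2,3) S eps_private by (intro measure_PiM_le_prod) auto
    also have "\<dots> \<le> exp (D * ?L) * measure (PiM {..<m} (\<lambda>i. M i (x' i))) S"
      using exponent by (rule mult_right_mono) simp
    finally show "measure (PiM {..<m} (\<lambda>i. M i (x i))) S \<le> exp (D * ?L) * measure (PiM {..<m} (\<lambda>i. M i (x' i))) S" .
  qed
qed

end
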